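(* Let $N$ be an odd positive integer and let $|\psi\rangle$ be any pure state of $N$ qubits, with density matrix $\rho=|\psi\rangle\langle\psi|$. Then its length of correlations satisfies $$\mathcal{C}(\psi)=\sum_{j_1,\dots,j_N=1}^{3} T_{j_1\dots j_N}^2\;\le\; 2^{N-1}.$$
   Context: Let $\sigma_0=\mathbb{I}$ and let $\sigma_1,\sigma_2,\sigma_3$ be the Pauli matrices. Any $N$-qubit density matrix can be written as $\rho=2^{-N}\sum_{\mu_1,\dots,\mu_N=0}^{3}T_{\mu_1\dots\mu_N}\,\sigma_{\mu_1}\otimes\dots\otimes\sigma_{\mu_N}$ with real coefficients $T_{\mu_1\dots\mu_N}=\mathrm{Tr}(\rho\,\sigma_{\mu_1}\otimes\dots\otimes\sigma_{\mu_N})$. The length of correlations of $\rho$ is $\mathcal{C}(\rho)=\sum_{j_1,\dots,j_N=1}^{3}T_{j_1\dots j_N}^2$ (all indices ranging over $1,2,3$ only, i.e. only full $N$-partite correlations). *)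

theory Defs
  imports Complex_Main
begin

text \<open>Computational basis of N qubits: bit strings of length N (False = |0>, True = |1>).\<close>
definition qbasis :: "nat \<Rightarrow> bool list set" where
  "qbasis N = {xs. length xs = N}"

text \<open>Pauli matrices sigma_0 = I, sigma_1, sigma_2, sigma_3, entries indexed by (row, column).\<close>
definition pauli :: "nat \<Rightarrow> bool \<Rightarrow> bool \<Rightarrow> complex" where
  "pauli \<mu> r c =
     (if \<mu> = 0 then (if r = c then 1 else 0)
      else if \<mu> = 1 then (if r \<noteq> c then 1 else 0)
      else if \<mu> = 2 then (if r = c then 0 else if r then \<i> else - \<i>)
      else if \<mu> = 3 then (if r \<noteq> c then 0 else if r then -1 else 1)
      else 0)"

definition pauli_tensor :: "nat list \<Rightarrow> bool list \<Rightarrow> bool list \<Rightarrow> complex" where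
  "pauli_tensor \<mu>s r c = (\<Prod>k<length \<mu>s. pauli (\<mu>s ! k) (r ! k) (c ! k))"

definition is_pure_state :: "nat \<Rightarrow> (bool list \<Rightarrow> complex) \<Rightarrow> bool" where
  "is_pure_state N \<psi> \<longleftrightarrow> (\<Sum>r\<in>qbasis N. (cmod (\<psi> r))\<^sup>2) = 1"

definition density :: "(bool list \<Rightarrow> complex) \<Rightarrow> bool list \<Rightarrow> bool list \<Rightarrow> complex" where
  "density \<psi> r c = \<psi> r * cnj (\<psi> c)"

text \<open>Correlation coefficient T_{mu_1..mu_N} = Tr(rho sigma_{mu_1} \<otimes> ... \<otimes> sigma_{mu_N})
  (a real number; we take the real part, the imaginary part being zero).\<close>
definition corr_T :: "nat \<Rightarrow> (bool list \<Rightarrow> complex) \<Rightarrow> nat list \<Rightarrow> real" where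
  "corr_T N \<psi> \<mu>s =
     Re (\<Sum>r\<in>qbasis N. \<Sum>c\<in>qbasis N. density \<psi> r c * pauli_tensor \<mu>s c r)"

definition length_of_correlations :: "nat \<Rightarrow> (bool list \<Rightarrow> complex) \<Rightarrow> real" where
  "length_of_correlations N \<psi> =
     (\<Sum>js\<in>{js. length js = N \<and> set js \<subseteq> {1,2,3}}. (corr_T N \<psi> js)\<^sup>2)"

end

theory Submission
  imports Defs
begin

text \<open>Expand all coefficients \<open>T\<^sub>\<mu>\<close>, \<open>\<mu> \<in> {0,1,2,3}\<^sup>N\<close>, in the computational basis.
  The single-qubit identities \<open>\<Sum>\<^sub>\<mu> \<sigma>\<^sub>\<mu> \<otimes> \<sigma>\<^sub>\<mu> = 2 SWAP\<close> and \<open>\<Sum>\<^sub>\<mu> s\<^sub>\<mu> \<sigma>\<^sub>\<mu> \<otimes> \<sigma>\<^sub>\<mu> = 2 \<epsilon> \<otimes> \<epsilon>\<close>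
  (with \<open>s\<^sub>0 = 1\<close>, \<open>s\<^sub>1 = s\<^sub>2 = s\<^sub>3 = -1\<close> and \<open>\<epsilon>\<close> the antisymmetric \<open>2\<times>2\<close> matrix) tensorise.
  The first gives \<open>\<Sum>\<^sub>\<mu> T\<^sub>\<mu>\<^sup>2 = 2\<^sup>N\<close> for a pure state; the second gives
  \<open>\<Sum>\<^sub>\<mu> s\<^sub>\<mu> T\<^sub>\<mu>\<^sup>2 = 2\<^sup>N |\<psi>\<^sup>T \<epsilon>\<^sup>\<otimes>\<^sup>N \<psi>|\<^sup>2\<close>, which vanishes for odd \<open>N\<close> because \<open>\<epsilon>\<^sup>\<otimes>\<^sup>N\<close> is then
  antisymmetric. For odd \<open>N\<close> the full correlations are exactly the strings of sign \<open>-1\<close>,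
  so they sum to at most half of \<open>\<Sum>\<^sub>\<mu> (1 - s\<^sub>\<mu>) T\<^sub>\<mu>\<^sup>2 = 2\<^sup>N\<close>.\<close>

definition lists_of_length :: "'a set \<Rightarrow> nat \<Rightarrow> 'a list set" where
  "lists_of_length A n = {xs. length xs = n \<and> set xs \<subseteq> A}"

lemma lists_of_length_0: "lists_of_length A 0 = {[]}"
  by (auto simp: lists_of_length_def)

lemma lists_of_length_Suc:
  "lists_of_length A (Suc n) = (\<lambda>(x, xs). x # xs) ` (A \<times> lists_of_length A n)"
  by (auto simp: lists_of_length_def length_Suc_conv image_iff)

lemma finite_lists_of_length: "finite A \<Longrightarrow> finite (lists_of_length A n)"
  using finite_lists_length_eq[of A n] by (simp add: lists_of_length_def conj_commute)

lemma qbasis_eq_lists_of_length: "qbasis N = lists_of_length UNIV N"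
  by (simp add: qbasis_def lists_of_length_def)

lemma finite_qbasis: "finite (qbasis N)"
  by (simp add: qbasis_eq_lists_of_length finite_lists_of_length)

lemma sum_lists_of_length_prod:
  fixes f :: "nat \<Rightarrow> 'a \<Rightarrow> 'b::comm_semiring_1"
  assumes "finite A"
  shows "(\<Sum>xs\<in>lists_of_length A n. \<Prod>k<n. f k (xs ! k)) = (\<Prod>k<n. \<Sum>x\<in>A. f k x)"
proof (induction n arbitrary: f)
  case 0
  then show ?case by (simp add: lists_of_length_0)
next
  case (Suc n)
  have inj: "inj_on (\<lambda>(x, xs). x # xs) (A \<times> lists_of_length A n)"
    by (auto simp: inj_on_def)
  have "(\<Sum>xs\<in>lists_of_length A (Suc n). \<Prod>k<Suc n. f k (xs ! k))
      = (\<Sum>x\<in>A. \<Sum>xs\<in>lists_of_length A n. f 0 x * (\<Prod>k<n. f (Suc k) (xs ! k)))"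
    unfolding lists_of_length_Suc sum.reindex[OF inj]
    by (simp add: sum.cartesian_product case_prod_beta prod.lessThan_Suc_shift del: prod.lessThan_Suc)
  also have "\<dots> = (\<Sum>x\<in>A. f 0 x * (\<Prod>k<n. \<Sum>x\<in>A. f (Suc k) x))"
    by (simp add: Suc.IH[of "\<lambda>k. f (Suc k)"] sum_distrib_left[symmetric])
  also have "\<dots> = (\<Prod>k<Suc n. \<Sum>x\<in>A. f k x)"
    by (simp only: prod.lessThan_Suc_shift sum_distrib_right)
  finally show ?case .
qed

lemma prod_of_bool_nth_eq:
  assumes "length xs = n" "length ys = n"
  shows "(\<Prod>k<n. (of_bool (xs ! k = ys ! k) :: 'a::comm_semiring_1)) = of_bool (xs = ys)"
proof -
  have "(\<Prod>k<n. (of_bool (xs ! k = ys ! k) :: 'a)) = of_bool (\<forall>k<n. xs ! k = ys ! k)"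
    by (induction n) (auto simp: less_Suc_eq)
  with assms show ?thesis
    by (simp add: list_eq_iff_nth_eq)
qed

lemma sum_sum_antisym_eq_0:
  fixes f :: "'a \<Rightarrow> 'a \<Rightarrow> 'b::field_char_0"
  assumes "\<And>x y. x \<in> B \<Longrightarrow> y \<in> B \<Longrightarrow> f y x = - f x y"
  shows "(\<Sum>x\<in>B. \<Sum>y\<in>B. f x y) = 0"
proof -
  have "(\<Sum>x\<in>B. \<Sum>y\<in>B. f x y) = (\<Sum>y\<in>B. \<Sum>x\<in>B. - f y x)"
    by (subst sum.swap) (intro sum.cong refl assms; assumption)
  then show ?thesis
    by (simp add: sum_negf)
qed

lemma weighted_sum_square_bilinear:
  fixes a :: "'i \<Rightarrow> 'i \<Rightarrow> 'b::comm_ring_1" and P :: "'m \<Rightarrow> 'i \<Rightarrow> 'i \<Rightarrow> 'b"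
  shows "(\<Sum>\<mu>\<in>M. w \<mu> * (\<Sum>r\<in>B. \<Sum>c\<in>B. a r c * P \<mu> c r)\<^sup>2)
    = (\<Sum>r\<in>B. \<Sum>r'\<in>B. \<Sum>c\<in>B. \<Sum>c'\<in>B. a r c * a r' c' * (\<Sum>\<mu>\<in>M. w \<mu> * P \<mu> c r * P \<mu> c' r'))"
proof -
  have square: "(\<Sum>r\<in>B. \<Sum>c\<in>B. a r c * P \<mu> c r)\<^sup>2
    = (\<Sum>r\<in>B. \<Sum>r'\<in>B. \<Sum>c\<in>B. \<Sum>c'\<in>B. (a r c * P \<mu> c r) * (a r' c' * P \<mu> c' r'))" for \<mu>
    by (simp only: power2_eq_square sum_product)
  have "(\<Sum>\<mu>\<in>M. w \<mu> * (\<Sum>r\<in>B. \<Sum>c\<in>B. a r c * P \<mu> c r)\<^sup>2)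
    = (\<Sum>\<mu>\<in>M. \<Sum>r\<in>B. \<Sum>r'\<in>B. \<Sum>c\<in>B. \<Sum>c'\<in>B. w \<mu> * ((a r c * P \<mu> c r) * (a r' c' * P \<mu> c' r')))"
    by (simp only: square sum_distrib_left)
  also have "\<dots> = (\<Sum>r\<in>B. \<Sum>r'\<in>B. \<Sum>c\<in>B. \<Sum>c'\<in>B. \<Sum>\<mu>\<in>M. w \<mu> * ((a r c * P \<mu> c r) * (a r' c' * P \<mu> c' r')))"
    by (subst sum.swap, rule sum.cong, simp, subst sum.swap, rule sum.cong, simp,
        subst sum.swap, rule sum.cong, simp, subst sum.swap, simp)
  finally show ?thesis
    by (simp add: sum_distrib_left mult_ac)
qed

definition pauli_sign :: "nat \<Rightarrow> real" where
  "pauli_sign m = (if m = 0 then 1 else -1)"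

definition pauli_tensor_sign :: "nat list \<Rightarrow> real" where
  "pauli_tensor_sign \<mu>s = (\<Prod>k<length \<mu>s. pauli_sign (\<mu>s ! k))"

definition epsilon :: "bool \<Rightarrow> bool \<Rightarrow> complex" where
  "epsilon a b = (if a = b then 0 else if a then -1 else 1)"

definition epsilon_tensor :: "bool list \<Rightarrow> bool list \<Rightarrow> complex" where
  "epsilon_tensor xs ys = (\<Prod>k<length xs. epsilon (xs ! k) (ys ! k))"

lemma pauli_completeness:
  "(\<Sum>m\<in>{0,1,2,3}. pauli m a b * pauli m c d) = 2 * of_bool (a = d) * of_bool (b = c)"
  by (cases a; cases b; cases c; cases d) (simp_all add: pauli_def)

lemma pauli_signed_completeness:
  "(\<Sum>m\<in>{0,1,2,3}. of_real (pauli_sign m) * pauli m a b * pauli m c d) = 2 * epsilon a c * epsilon b d"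
  by (cases a; cases b; cases c; cases d) (simp_all add: pauli_def pauli_sign_def epsilon_def)

lemma cnj_pauli: "cnj (pauli m a b) = pauli m b a"
  by (cases a; cases b) (auto simp: pauli_def)

lemma pauli_tensor_completeness:
  assumes "length c = N" "length r = N" "length c' = N" "length r' = N"
  shows "(\<Sum>\<mu>\<in>lists_of_length {0,1,2,3} N. pauli_tensor \<mu> c r * pauli_tensor \<mu> c' r')
     = (if c = r' \<and> r = c' then 2 ^ N else 0)"
proof -
  have "(\<Sum>\<mu>\<in>lists_of_length {0,1,2,3} N. pauli_tensor \<mu> c r * pauli_tensor \<mu> c' r')
     = (\<Sum>\<mu>\<in>lists_of_length {0,1,2,3} N. \<Prod>k<N. pauli (\<mu> ! k) (c ! k) (r ! k) * pauli (\<mu> ! k) (c' ! k) (r' ! k))"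
    by (rule sum.cong) (auto simp: lists_of_length_def pauli_tensor_def prod.distrib)
  also have "\<dots> = (\<Prod>k<N. 2 * of_bool (c ! k = r' ! k) * of_bool (r ! k = c' ! k))"
    by (subst sum_lists_of_length_prod) (simp_all only: finite.intros pauli_completeness)
  finally show ?thesis
    using assms by (simp add: prod.distrib prod_of_bool_nth_eq)
qed

lemma pauli_tensor_signed_completeness:
  assumes "length c = N" "length r = N"
  shows "(\<Sum>\<mu>\<in>lists_of_length {0,1,2,3} N.
            of_real (pauli_tensor_sign \<mu>) * pauli_tensor \<mu> c r * pauli_tensor \<mu> c' r')
     = 2 ^ N * epsilon_tensor c c' * epsilon_tensor r r'"
proof -
  have "(\<Sum>\<mu>\<in>lists_of_length {0,1,2,3} N.
            of_real (pauli_tensor_sign \<mu>) * pauli_tensor \<mu> c r * pauli_tensor \<mu> c' r')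
     = (\<Sum>\<mu>\<in>lists_of_length {0,1,2,3} N. \<Prod>k<N.
          of_real (pauli_sign (\<mu> ! k)) * pauli (\<mu> ! k) (c ! k) (r ! k) * pauli (\<mu> ! k) (c' ! k) (r' ! k))"
    by (rule sum.cong)
      (auto simp: lists_of_length_def pauli_tensor_def pauli_tensor_sign_def prod.distrib)
  also have "\<dots> = (\<Prod>k<N. 2 * epsilon (c ! k) (c' ! k) * epsilon (r ! k) (r' ! k))"
    by (subst sum_lists_of_length_prod) (simp_all only: finite.intros pauli_signed_completeness)
  finally show ?thesis
    using assms by (simp add: prod.distrib epsilon_tensor_def)
qed

lemma epsilon_tensor_antisym:
  assumes "odd (length xs)" "length ys = length xs"
  shows "epsilon_tensor ys xs = - epsilon_tensor xs ys"
proof -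
  have "epsilon_tensor ys xs = (\<Prod>k<length xs. - epsilon (xs ! k) (ys ! k))"
    unfolding epsilon_tensor_def assms(2) by (rule prod.cong) (auto simp: epsilon_def)
  also have "\<dots> = (-1) ^ length xs * epsilon_tensor xs ys"
    by (simp add: epsilon_tensor_def prod_uminus)
  finally show ?thesis
    using assms(1) by simp
qed

lemma pauli_tensor_sign_le_1: "pauli_tensor_sign \<mu>s \<le> 1"
proof -
  have "\<bar>pauli_sign m\<bar> = 1" for m
    by (simp add: pauli_sign_def)
  then have "\<bar>pauli_tensor_sign \<mu>s\<bar> = 1"
    by (simp add: pauli_tensor_sign_def abs_prod)
  then show ?thesis
    by simp
qed

lemma pauli_tensor_sign_full:
  assumes "odd (length \<mu>s)" "0 \<notin> set \<mu>s"
  shows "pauli_tensor_sign \<mu>s = -1"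
proof -
  have "pauli_sign (\<mu>s ! k) = -1" if "k < length \<mu>s" for k
    using assms(2) nth_mem[OF that] by (metis pauli_sign_def)
  then have "pauli_tensor_sign \<mu>s = (-1) ^ length \<mu>s"
    by (simp add: pauli_tensor_sign_def)
  with assms(1) show ?thesis
    by simp
qed

text \<open>The weight \<open>(1 - s\<^sub>\<mu>) / 2\<close> is \<open>1\<close> on full strings and nonnegative elsewhere.\<close>
lemma sum_full_strings_le_half:
  fixes g :: "nat list \<Rightarrow> real"
  assumes "odd N" "\<And>\<mu>s. 0 \<le> g \<mu>s"
  shows "(\<Sum>\<mu>s\<in>lists_of_length {1,2,3} N. g \<mu>s)
    \<le> ((\<Sum>\<mu>s\<in>lists_of_length {0,1,2,3} N. g \<mu>s)
         - (\<Sum>\<mu>s\<in>lists_of_length {0,1,2,3} N. pauli_tensor_sign \<mu>s * g \<mu>s)) / 2"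
proof -
  let ?h = "\<lambda>\<mu>s. (1 - pauli_tensor_sign \<mu>s) / 2 * g \<mu>s"
  have "pauli_tensor_sign \<mu>s = -1" if "\<mu>s \<in> lists_of_length {1,2,3} N" for \<mu>s
    using assms(1) that by (intro pauli_tensor_sign_full) (auto simp: lists_of_length_def)
  then have "(\<Sum>\<mu>s\<in>lists_of_length {1,2,3} N. g \<mu>s) = (\<Sum>\<mu>s\<in>lists_of_length {1,2,3} N. ?h \<mu>s)"
    by (intro sum.cong) simp_all
  also have "\<dots> \<le> (\<Sum>\<mu>s\<in>lists_of_length {0,1,2,3} N. ?h \<mu>s)"
    using assms(2) pauli_tensor_sign_le_1
    by (intro sum_mono2 finite_lists_of_length) (auto simp: lists_of_length_def)
  also have "\<dots> = ((\<Sum>\<mu>s\<in>lists_of_length {0,1,2,3} N. g \<mu>s)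
         - (\<Sum>\<mu>s\<in>lists_of_length {0,1,2,3} N. pauli_tensor_sign \<mu>s * g \<mu>s)) / 2"
    by (simp add: sum_divide_distrib[symmetric] sum_subtractf[symmetric] algebra_simps)
  finally show ?thesis .
qed

lemma of_real_corr_T:
  "complex_of_real (corr_T N \<psi> \<mu>)
     = (\<Sum>r\<in>qbasis N. \<Sum>c\<in>qbasis N. density \<psi> r c * pauli_tensor \<mu> c r)"
    (is "_ = ?t")
proof -
  have "cnj ?t = (\<Sum>r\<in>qbasis N. \<Sum>c\<in>qbasis N. density \<psi> c r * pauli_tensor \<mu> r c)"
    by (simp add: density_def pauli_tensor_def cnj_pauli mult_ac)
  also have "\<dots> = ?t"
    by (rule sum.swap)
  finally have "Im (cnj ?t) = Im ?t"
    by (rule arg_cong)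
  then have "Im ?t = 0"
    by (simp only: cnj.sel(2))
  then show ?thesis
    by (simp add: corr_T_def complex_eq_iff)
qed

lemma sum_corr_T_squares:
  "(\<Sum>\<mu>\<in>lists_of_length {0,1,2,3} N. (corr_T N \<psi> \<mu>)\<^sup>2)
     = 2 ^ N * (\<Sum>r\<in>qbasis N. (cmod (\<psi> r))\<^sup>2)\<^sup>2"
proof -
  let ?B = "qbasis N"
  have "complex_of_real (\<Sum>\<mu>\<in>lists_of_length {0,1,2,3} N. (corr_T N \<psi> \<mu>)\<^sup>2)
      = (\<Sum>\<mu>\<in>lists_of_length {0,1,2,3} N.
           1 * (\<Sum>r\<in>?B. \<Sum>c\<in>?B. density \<psi> r c * pauli_tensor \<mu> c r)\<^sup>2)"
    by (simp add: of_real_corr_T)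
  also have "\<dots> = (\<Sum>r\<in>?B. \<Sum>r'\<in>?B. \<Sum>c\<in>?B. \<Sum>c'\<in>?B.
      density \<psi> r c * density \<psi> r' c' * (if c = r' \<and> r = c' then 2 ^ N else 0))"
    unfolding weighted_sum_square_bilinear
    by (intro sum.cong refl) (simp add: pauli_tensor_completeness qbasis_def del: One_nat_def)
  also have "\<dots> = (\<Sum>r\<in>?B. \<Sum>r'\<in>?B. \<Sum>c\<in>?B. \<Sum>c'\<in>?B.
      if c = r' \<and> r = c' then 2 ^ N * (density \<psi> r r' * density \<psi> r' r) else 0)"
    by (intro sum.cong refl) auto
  also have "\<dots> = (\<Sum>r\<in>?B. \<Sum>r'\<in>?B. 2 ^ N * (density \<psi> r r' * density \<psi> r' r))"
    by (simp add: finite_qbasis conj_commute flip: if_if_eq_conj)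
  also have "\<dots> = 2 ^ N * (\<Sum>r\<in>?B. \<psi> r * cnj (\<psi> r))\<^sup>2"
    by (simp add: density_def power2_eq_square sum_product sum_distrib_left mult_ac)
  also have "\<dots> = complex_of_real (2 ^ N * (\<Sum>r\<in>?B. (cmod (\<psi> r))\<^sup>2)\<^sup>2)"
    by (simp flip: complex_norm_square)
  finally show ?thesis
    by (simp only: of_real_eq_iff)
qed

lemma sum_signed_corr_T_squares:
  assumes "odd N"
  shows "(\<Sum>\<mu>\<in>lists_of_length {0,1,2,3} N. pauli_tensor_sign \<mu> * (corr_T N \<psi> \<mu>)\<^sup>2) = 0"
proof -
  let ?B = "qbasis N"
  have "complex_of_real (\<Sum>\<mu>\<in>lists_of_length {0,1,2,3} N. pauli_tensor_sign \<mu> * (corr_T N \<psi> \<mu>)\<^sup>2)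
      = (\<Sum>\<mu>\<in>lists_of_length {0,1,2,3} N. of_real (pauli_tensor_sign \<mu>) *
           (\<Sum>r\<in>?B. \<Sum>c\<in>?B. density \<psi> r c * pauli_tensor \<mu> c r)\<^sup>2)"
    by (simp add: of_real_corr_T)
  also have "\<dots> = (\<Sum>r\<in>?B. \<Sum>r'\<in>?B. \<Sum>c\<in>?B. \<Sum>c'\<in>?B.
      density \<psi> r c * density \<psi> r' c' * (2 ^ N * epsilon_tensor c c' * epsilon_tensor r r'))"
    unfolding weighted_sum_square_bilinear
    by (intro sum.cong refl) (simp add: pauli_tensor_signed_completeness qbasis_def del: One_nat_def)
  also have "\<dots> = (\<Sum>r\<in>?B. \<Sum>r'\<in>?B. \<Sum>c\<in>?B. \<Sum>c'\<in>?B.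
      (\<psi> r * \<psi> r' * epsilon_tensor r r') * (2 ^ N * cnj (\<psi> c) * cnj (\<psi> c') * epsilon_tensor c c'))"
    by (simp add: density_def mult_ac)
  also have "\<dots> = (\<Sum>r\<in>?B. \<Sum>r'\<in>?B. \<psi> r * \<psi> r' * epsilon_tensor r r') *
      (\<Sum>c\<in>?B. \<Sum>c'\<in>?B. 2 ^ N * cnj (\<psi> c) * cnj (\<psi> c') * epsilon_tensor c c')"
    unfolding sum_distrib_right unfolding sum_distrib_left ..
  also have "(\<Sum>r\<in>?B. \<Sum>r'\<in>?B. \<psi> r * \<psi> r' * epsilon_tensor r r') = 0"
  proof (rule sum_sum_antisym_eq_0)
    fix x y
    assume "x \<in> ?B" "y \<in> ?B"
    then show "\<psi> y * \<psi> x * epsilon_tensor y x = - (\<psi> x * \<psi> y * epsilon_tensor x y)"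
      using assms epsilon_tensor_antisym[of x y] by (simp add: qbasis_def)
  qed
  finally show ?thesis
    by (simp only: mult_zero_left of_real_eq_0_iff)
qed

theorem theorem3:
  fixes N :: nat and \<psi> :: "bool list \<Rightarrow> complex"
  assumes "odd N"
    and "is_pure_state N \<psi>"
  shows "length_of_correlations N \<psi> \<le> 2 ^ (N - 1)"
proof -
  have purity: "(\<Sum>\<mu>\<in>lists_of_length {0,1,2,3} N. (corr_T N \<psi> \<mu>)\<^sup>2) = 2 ^ N"
    using assms(2) unfolding is_pure_state_def by (simp only: sum_corr_T_squares power_one mult_1_right)
  have "length_of_correlations N \<psi> = (\<Sum>\<mu>\<in>lists_of_length {1,2,3} N. (corr_T N \<psi> \<mu>)\<^sup>2)"
    by (simp add: length_of_correlations_def lists_of_length_def)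
  also have "\<dots> \<le> (2 ^ N - 0) / 2"
    using sum_full_strings_le_half[OF assms(1), of "\<lambda>\<mu>. (corr_T N \<psi> \<mu>)\<^sup>2"]
    by (simp only: purity sum_signed_corr_T_squares[OF assms(1)] zero_le_power2)
  also have "\<dots> = 2 ^ (N - 1)"
    using odd_pos[OF assms(1)] by (simp add: power_diff)
  finally show ?thesis .
qed

end
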